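(* Let $\psi$ be a simple, continuous, translation-invariant valuation on the set $\mathcal{C}_n$ of compact $\ell_1$-convex subsets of $\mathbb{R}^n$. Then $\psi=c\,\mathrm{Vol}_n$ for some $c\in\mathbb{R}$, where $\mathrm{Vol}_n$ is Lebesgue measure.
   Context: A subset $Z\subseteq\mathbb{R}^n$ is $\ell_1$-convex if for all $z,z'\in Z$, with $D=\sum_i|z_i-z'_i|$, there is $\gamma\colon[0,D]\to Z$ with $\gamma(0)=z,\gamma(D)=z'$ and $\sum_i|\gamma_i(t)-\gamma_i(t')|=|t-t'|$ for all $t,t'$. A valuation on $\mathcal{C}_n$ is $\phi\colon\mathcal{C}_n\to\mathbb{R}$ with $\phi(\emptyset)=0$ and $\phi(X\cup Y)=\phi(X)+\phi(Y)-\phi(X\cap Y)$ whenever $X,Y,X\cup Y,X\cap Y\in\mathcal{C}_n$; continuity is with respect to the Hausdorff metric; translation-invariance means $\phi(X+a)=\phi(X)$. The dimension of a nonempty $\ell_1$-convex $X$ is the least $i$ such that $X\subseteq P+q$ for some $i$-dimensional coordinate subspace $P$ (spanned by $i$ standard basis vectors) and $q\in\mathbb{R}^n$. A valuation is simple if it vanishes on all $X\in\mathcal{C}_n$ of dimension less than $n$. *)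

theory Defs
  imports "HOL-Analysis.Analysis"
begin

text \<open>Points of R^n are modelled as real ^ 'n, with 'n a finite index type (n = CARD('n)).\<close>

definition l1_dist :: "real ^ 'n \<Rightarrow> real ^ 'n \<Rightarrow> real" where
  "l1_dist z z' = (\<Sum>i\<in>UNIV. \<bar>z $ i - z' $ i\<bar>)"

definition l1_convex :: "(real ^ 'n) set \<Rightarrow> bool" where
  "l1_convex Z \<longleftrightarrow> (\<forall>z\<in>Z. \<forall>z'\<in>Z.
     (\<exists>\<gamma> :: real \<Rightarrow> real ^ 'n.
        \<gamma> 0 = z \<and> \<gamma> (l1_dist z z') = z' \<and>
        (\<forall>t\<in>{0..l1_dist z z'}. \<gamma> t \<in> Z) \<and>
        (\<forall>t\<in>{0..l1_dist z z'}. \<forall>t'\<in>{0..l1_dist z z'}.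
            l1_dist (\<gamma> t) (\<gamma> t') = \<bar>t - t'\<bar>)))"

definition Cn :: "(real ^ 'n) set set" where
  "Cn = {X. compact X \<and> l1_convex X}"

definition valuation :: "((real ^ 'n) set \<Rightarrow> real) \<Rightarrow> bool" where
  "valuation \<phi> \<longleftrightarrow> \<phi> {} = 0 \<and>
     (\<forall>X Y. X \<in> Cn \<and> Y \<in> Cn \<and> X \<union> Y \<in> Cn \<and> X \<inter> Y \<in> Cn \<longrightarrow>
        \<phi> (X \<union> Y) = \<phi> X + \<phi> Y - \<phi> (X \<inter> Y))"

definition hausdorff_dist :: "(real ^ 'n) set \<Rightarrow> (real ^ 'n) set \<Rightarrow> real" where
  "hausdorff_dist X Y = max (SUP x\<in>X. infdist x Y) (SUP y\<in>Y. infdist y X)"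

text \<open>Continuity w.r.t. the Hausdorff metric on C_n (the empty set is an isolated point).\<close>
definition hausdorff_continuous :: "((real ^ 'n) set \<Rightarrow> real) \<Rightarrow> bool" where
  "hausdorff_continuous \<phi> \<longleftrightarrow>
     (\<forall>X\<in>Cn. X \<noteq> {} \<longrightarrow> (\<forall>e>0. \<exists>d>0. \<forall>Y\<in>Cn. Y \<noteq> {} \<longrightarrow>
         hausdorff_dist X Y < d \<longrightarrow> \<bar>\<phi> Y - \<phi> X\<bar> < e))"

definition translation_invariant :: "((real ^ 'n) set \<Rightarrow> real) \<Rightarrow> bool" where
  "translation_invariant \<phi> \<longleftrightarrow> (\<forall>X\<in>Cn. \<forall>a. \<phi> ((\<lambda>x. x + a) ` X) = \<phi> X)"

definition l1_dim :: "(real ^ 'n) set \<Rightarrow> nat" where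
  "l1_dim X = (LEAST i. \<exists>(I :: 'n set) (q :: real ^ 'n). card I = i \<and>
       X \<subseteq> (\<lambda>p. p + q) ` span ((\<lambda>j. axis j 1) ` I))"

definition simple_valuation :: "((real ^ 'n) set \<Rightarrow> real) \<Rightarrow> bool" where
  "simple_valuation \<phi> \<longleftrightarrow>
     (\<forall>X\<in>Cn. X \<noteq> {} \<longrightarrow> l1_dim X < CARD('n) \<longrightarrow> \<phi> X = 0)"

end

theory Submission
  imports Defs
begin

text \<open>
  A simple valuation vanishes on sections by coordinate hyperplanes, so it splits additively
  when a set is cut by such a hyperplane; by continuity it even vanishes on every set covered by
  finitely many coordinate hyperplanes. Translation invariance and the dyadic subdivision of the
  unit cube then give \<psi>(Q) = c vol(Q) for every dyadic cube Q, where c = \<psi>([0,1]^n).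

  For X in C_n let X_k be the union of the closed dyadic cubes of side 2^-k that meet X. It is
  again compact and l1-convex, since an l1-geodesic in X can be shadowed, coordinate by
  coordinate, by a monotone path through neighbouring cubes. Cutting X_k along the grid leaves
  pieces that are whole cubes or lie in grid hyperplanes, so \<psi>(X_k) = c vol(X_k). As k grows,
  X_k decreases to X and converges to it in the Hausdorff metric; continuity of \<psi> and of
  Lebesgue measure give \<psi>(X) = c vol(X).
\<close>

section \<open>The l1 metric and monotone paths\<close>

lemma l1_dist_commute: "l1_dist x y = l1_dist y x"
  unfolding l1_dist_def by (simp add: abs_minus_commute)

lemma l1_dist_self [simp]: "l1_dist x x = 0"
  unfolding l1_dist_def by simp

lemma l1_dist_nonneg: "0 \<le> l1_dist x y"
  unfolding l1_dist_def by (simp add: sum_nonneg)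

lemma l1_dist_triangle: "l1_dist x z \<le> l1_dist x y + l1_dist y z"
  unfolding l1_dist_def sum.distrib[symmetric] by (rule sum_mono) simp

lemma l1_dist_eq_0_iff [simp]: "l1_dist x y = 0 \<longleftrightarrow> x = y"
proof
  assume "l1_dist x y = 0"
  then have "\<forall>i\<in>UNIV. \<bar>x$i - y$i\<bar> = 0" unfolding l1_dist_def
    by (subst sum_nonneg_eq_0_iff[symmetric]) auto
  then show "x = y" by (simp add: vec_eq_iff)
qed simp

lemma dist_le_l1_dist: "dist x y \<le> l1_dist x y"
  unfolding dist_norm l1_dist_def using norm_le_l1_cart[of "x - y"] by simp

lemma continuous_on_l1_dist [continuous_intros]:
  assumes "continuous_on S f" "continuous_on S g"
  shows "continuous_on S (\<lambda>t. l1_dist (f t) (g t))"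
  unfolding l1_dist_def by (intro continuous_intros assms)

definition in_order :: "real \<Rightarrow> real \<Rightarrow> real \<Rightarrow> real \<Rightarrow> bool" where
  "in_order a b c d \<longleftrightarrow> (a \<le> b \<and> b \<le> c \<and> c \<le> d) \<or> (d \<le> c \<and> c \<le> b \<and> b \<le> a)"

lemma abs_diff_chain_eq_iff_in_order:
  "\<bar>a - b\<bar> + \<bar>b - c\<bar> + \<bar>c - d\<bar> = \<bar>a - d\<bar> \<longleftrightarrow> in_order a b c d"
  unfolding in_order_def abs_real_def by auto

lemma in_order_uminus [simp]: "in_order (-a) (-b) (-c) (-d) \<longleftrightarrow> in_order a b c d"
  unfolding in_order_def by auto

lemma in_order_le: "in_order a b c d \<Longrightarrow> a \<le> d \<Longrightarrow> a \<le> b \<and> b \<le> c \<and> c \<le> d"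
  unfolding in_order_def by auto

lemma in_order_ge: "in_order a b c d \<Longrightarrow> d \<le> a \<Longrightarrow> d \<le> c \<and> c \<le> b \<and> b \<le> a"
  unfolding in_order_def by auto

lemma in_order_linear:
  fixes a d t t' :: real
  assumes "0 \<le> t" "t \<le> t'" "t' \<le> 1"
  shows "in_order a (a + t * d) (a + t' * d) (a + d)"
proof (cases "0 \<le> d")
  case True
  then have "0 \<le> t * d" "t * d \<le> t' * d" "t' * d \<le> d"
    using assms by (auto intro: mult_right_mono mult_left_le_one_le)
  then show ?thesis unfolding in_order_def by simp
next
  case False
  then have "t * d \<le> 0" "t' * d \<le> t * d" "d \<le> t' * d"
    using assms by (auto intro: mult_right_mono_neg mult_nonneg_nonpos simp: mult_le_cancel_right)
  then show ?thesis unfolding in_order_def by simp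
qed

lemma l1_dist_chain_eq_iff:
  "l1_dist z a + l1_dist a b + l1_dist b z' = l1_dist z z' \<longleftrightarrow> (\<forall>i. in_order (z$i) (a$i) (b$i) (z'$i))"
proof
  define f where "f i = \<bar>z$i - a$i\<bar> + \<bar>a$i - b$i\<bar> + \<bar>b$i - z'$i\<bar> - \<bar>z$i - z'$i\<bar>" for i
  assume "l1_dist z a + l1_dist a b + l1_dist b z' = l1_dist z z'"
  then have "sum f UNIV = 0" unfolding l1_dist_def f_def by (simp add: sum.distrib sum_subtractf)
  moreover have "\<forall>i\<in>UNIV. 0 \<le> f i" unfolding f_def by (auto simp: abs_if)
  ultimately have "\<forall>i\<in>UNIV. f i = 0" by (subst sum_nonneg_eq_0_iff[symmetric]) auto
  then show "\<forall>i. in_order (z$i) (a$i) (b$i) (z'$i)"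
    by (simp add: f_def abs_diff_chain_eq_iff_in_order[symmetric])
next
  assume "\<forall>i. in_order (z$i) (a$i) (b$i) (z'$i)"
  then show "l1_dist z a + l1_dist a b + l1_dist b z' = l1_dist z z'"
    unfolding l1_dist_def sum.distrib[symmetric] abs_diff_chain_eq_iff_in_order[symmetric] by simp
qed

text \<open>A monotone path is an l1-geodesic parametrised by [0,1] instead of by arc length:
  this form survives reparametrisation and is checked coordinatewise.\<close>
definition monotone_path :: "(real ^ 'n) set \<Rightarrow> (real \<Rightarrow> real ^ 'n) \<Rightarrow> real ^ 'n \<Rightarrow> real ^ 'n \<Rightarrow> bool" where
  "monotone_path X q z z' \<longleftrightarrow> continuous_on {0..1} q \<and> q 0 = z \<and> q 1 = z' \<and> q ` {0..1} \<subseteq> X \<and>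
     (\<forall>t t'. 0 \<le> t \<longrightarrow> t \<le> t' \<longrightarrow> t' \<le> 1 \<longrightarrow> (\<forall>i. in_order (z$i) (q t $ i) (q t' $ i) (z'$i)))"

lemma l1_convexI:
  assumes "\<And>z z'. z \<in> X \<Longrightarrow> z' \<in> X \<Longrightarrow> \<exists>q. monotone_path X q z z'"
  shows "l1_convex X"
  unfolding l1_convex_def
proof (intro ballI)
  fix z z' assume "z \<in> X" "z' \<in> X"
  then obtain q where q: "monotone_path X q z z'" using assms by blast
  define D where "D = l1_dist z z'"
  define s where "s t = l1_dist z (q t)" for t
  have cq: "continuous_on {0..1} q" and q0: "q 0 = z" and q1: "q 1 = z'" and qX: "q ` {0..1} \<subseteq> X"
    and chain: "\<And>t t'. 0 \<le> t \<Longrightarrow> t \<le> t' \<Longrightarrow> t' \<le> 1 \<Longrightarrow>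
        l1_dist z (q t) + l1_dist (q t) (q t') + l1_dist (q t') z' = D"
    using q unfolding monotone_path_def D_def l1_dist_chain_eq_iff by auto
  have s_add: "s t' = s t + l1_dist (q t) (q t')" if "0 \<le> t" "t \<le> t'" "t' \<le> 1" for t t'
  proof -
    have "l1_dist z z' \<le> l1_dist z (q t') + l1_dist (q t') z'"
      and "l1_dist z (q t') \<le> l1_dist z (q t) + l1_dist (q t) (q t')"
      by (rule l1_dist_triangle)+
    then show ?thesis using chain[OF that] unfolding s_def D_def by linarith
  qed
  have "continuous_on {0..1} s" unfolding s_def by (intro continuous_intros cq)
  moreover have "s 0 = 0" "s 1 = D" using q0 q1 by (simp_all add: s_def D_def)
  ultimately have reach: "\<exists>t. 0 \<le> t \<and> t \<le> 1 \<and> s t = u" if "0 \<le> u" "u \<le> D" for u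
    using IVT'[of s 0 u 1] that by auto
  define T where "T u = (SOME t. 0 \<le> t \<and> t \<le> 1 \<and> s t = u)" for u
  have T: "0 \<le> T u \<and> T u \<le> 1 \<and> s (T u) = u" if "0 \<le> u" "u \<le> D" for u
    unfolding T_def by (rule someI_ex) (rule reach[OF that])
  define g where "g u = q (T u)" for u
  have D0: "0 \<le> D" unfolding D_def by (rule l1_dist_nonneg)
  have "l1_dist z (g 0) = 0" using T[of 0] D0 by (simp add: g_def s_def)
  then have g0: "g 0 = z" by simp
  have "l1_dist (g D) z' = 0" using T[of D] D0 chain[of "T D" 1] q1 by (simp add: g_def s_def)
  then have gD: "g D = z'" by simp
  have gX: "g t \<in> X" if "t \<in> {0..D}" for t
    using T[of t] that qX by (auto simp: g_def)
  have g_ordered: "l1_dist (g u) (g u') = \<bar>u - u'\<bar>" if "u \<in> {0..D}" "u' \<in> {0..D}" "T u \<le> T u'" for u u'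
    using s_add[of "T u" "T u'"] T[of u] T[of u'] that l1_dist_nonneg[of "g u" "g u'"] by (auto simp: g_def)
  have "l1_dist (g t) (g t') = \<bar>t - t'\<bar>" if "t \<in> {0..D}" "t' \<in> {0..D}" for t t'
    using g_ordered[OF that] g_ordered[OF that(2,1)] by (cases "T t \<le> T t'") (auto simp: l1_dist_commute)
  then show "\<exists>\<gamma>. \<gamma> 0 = z \<and> \<gamma> (l1_dist z z') = z' \<and> (\<forall>t\<in>{0..l1_dist z z'}. \<gamma> t \<in> X) \<and>
      (\<forall>t\<in>{0..l1_dist z z'}. \<forall>t'\<in>{0..l1_dist z z'}. l1_dist (\<gamma> t) (\<gamma> t') = \<bar>t - t'\<bar>)"
    using g0 gD gX unfolding D_def by blast
qed

lemma l1_convexD: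
  assumes "l1_convex X" "z \<in> X" "z' \<in> X"
  obtains q where "monotone_path X q z z'"
proof -
  define D where "D = l1_dist z z'"
  obtain g where g0: "g 0 = z" and gD: "g D = z'" and gX: "\<forall>t\<in>{0..D}. g t \<in> X"
    and isometric: "\<forall>t\<in>{0..D}. \<forall>t'\<in>{0..D}. l1_dist (g t) (g t') = \<bar>t - t'\<bar>"
    using assms unfolding l1_convex_def D_def by blast
  have D0: "0 \<le> D" unfolding D_def by (rule l1_dist_nonneg)
  define q where "q t = g (D * t)" for t
  have inD: "D * t \<in> {0..D}" if "t \<in> {0..1}" for t
    using that D0 by (auto simp: mult_left_le)
  have "continuous_on {0..D} g"
    unfolding continuous_on_iff
  proof (intro ballI allI impI)
    fix x e assume "x \<in> {0..D}" "(0::real) < e"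
    then show "\<exists>d>0. \<forall>x'\<in>{0..D}. dist x' x < d \<longrightarrow> dist (g x') (g x) < e"
    proof (intro exI[of _ e] conjI ballI impI)
      fix x' assume "x' \<in> {0..D}" "dist x' x < e"
      then have "l1_dist (g x') (g x) < e" using isometric \<open>x \<in> {0..D}\<close> by (simp add: dist_real_def)
      then show "dist (g x') (g x) < e" using dist_le_l1_dist le_less_trans by blast
    qed (use \<open>0 < e\<close> in simp)
  qed
  then have "continuous_on {0..1} q" unfolding q_def
    by (rule continuous_on_compose2) (use inD in \<open>auto intro!: continuous_intros\<close>)
  moreover have "\<forall>i. in_order (z$i) (q t $ i) (q t' $ i) (z'$i)"
    if "0 \<le> t" "t \<le> t'" "t' \<le> 1" for t t'
  proof -
    have a: "D*t \<in> {0..D}" "D*t' \<in> {0..D}" and e: "0 \<in> {0..D}" "D \<in> {0..D}"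
      using inD that D0 by auto
    have "D*t \<le> D*t'" using that D0 by (simp add: mult_left_mono)
    have "l1_dist z (q t) = D*t" using isometric a e g0 by (force simp: q_def)
    moreover have "l1_dist (q t) (q t') = D*t' - D*t" using isometric a \<open>D*t \<le> D*t'\<close> by (force simp: q_def)
    moreover have "l1_dist (q t') z' = D - D*t'" using isometric a e gD by (force simp: q_def)
    ultimately have "l1_dist z (q t) + l1_dist (q t) (q t') + l1_dist (q t') z' = l1_dist z z'"
      by (simp add: D_def)
    then show ?thesis by (simp add: l1_dist_chain_eq_iff)
  qed
  ultimately have "monotone_path X q z z'"
    unfolding monotone_path_def using g0 gD gX inD by (auto simp: q_def)
  then show ?thesis by (rule that)
qed

section \<open>Intersections with boxes and coordinate slabs\<close>

lemma l1_convex_Int_is_interval: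
  assumes X: "l1_convex X" and C: "is_interval C"
  shows "l1_convex (X \<inter> C)"
proof (rule l1_convexI)
  fix z z' assume z: "z \<in> X \<inter> C" and z': "z' \<in> X \<inter> C"
  then obtain q where q: "monotone_path X q z z'" using l1_convexD[OF X] by blast
  have "q t \<in> C" if "t \<in> {0..1}" for t
  proof -
    have "\<forall>i. in_order (z$i) (q t $ i) (q t $ i) (z'$i)"
      using q that unfolding monotone_path_def by auto
    then show ?thesis
      using C z z' unfolding is_interval_cart in_order_def by blast
  qed
  then have "monotone_path (X \<inter> C) q z z'" using q unfolding monotone_path_def by auto
  then show "\<exists>q. monotone_path (X \<inter> C) q z z'" by blast
qed

lemma l1_convex_UNIV: "l1_convex (UNIV :: (real^'n) set)"
proof (rule l1_convexI)
  fix z z' :: "real^'n"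
  define q where "q t = z + t *\<^sub>R (z' - z)" for t :: real
  have "monotone_path UNIV q z z'"
    unfolding monotone_path_def q_def
    using in_order_linear[of _ _ "z$i" "z'$i - z$i" for i] by (auto intro!: continuous_intros)
  then show "\<exists>q. monotone_path UNIV q z z'" by blast
qed

lemma Cn_Int_is_interval:
  assumes "X \<in> Cn" "closed C" "is_interval C"
  shows "X \<inter> C \<in> Cn"
  using assms l1_convex_Int_is_interval compact_Int_closed unfolding Cn_def by blast

lemma Cn_cbox: "cbox a b \<in> Cn"
  using l1_convex_Int_is_interval[OF l1_convex_UNIV is_interval_cbox] unfolding Cn_def by simp

lemma Cn_Int_cbox: "Y \<in> Cn \<Longrightarrow> Y \<inter> cbox a b \<in> Cn"
  by (rule Cn_Int_is_interval) auto

lemma is_interval_component_preimage: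
  assumes "is_interval (S :: real set)"
  shows "is_interval {x::real^'n. x$i \<in> S}"
  using assms unfolding is_interval_cart is_interval_1 by (metis mem_Collect_eq)

lemma Cn_Int_component_interval:
  assumes "Y \<in> Cn" "closed S" "is_interval (S :: real set)"
  shows "Y \<inter> {x. x$i \<in> S} \<in> Cn"
proof (rule Cn_Int_is_interval[OF assms(1)])
  show "closed {x. x$i \<in> S}" using closed_vimage_vec_nth[OF assms(2)] by (simp add: vimage_def)
qed (rule is_interval_component_preimage[OF assms(3)])

lemma Cn_Int_component_le: "Y \<in> Cn \<Longrightarrow> Y \<inter> {x. x$i \<le> s} \<in> Cn"
  using Cn_Int_component_interval[of Y "{..s}" i] by (simp add: is_interval_ic)

lemma Cn_Int_component_ge: "Y \<in> Cn \<Longrightarrow> Y \<inter> {x. s \<le> x$i} \<in> Cn"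
  using Cn_Int_component_interval[of Y "{s..}" i] by (simp add: is_interval_ci)

lemma Cn_Int_component_between: "Y \<in> Cn \<Longrightarrow> Y \<inter> {x. a \<le> x$i \<and> x$i \<le> b} \<in> Cn"
  using Cn_Int_component_interval[of Y "{a..b}" i] by (simp add: is_interval_cc)

lemma Cn_Int_component_eq:
  assumes "Y \<in> Cn"
  shows "Y \<inter> {x. x$i = s} \<in> Cn"
proof -
  have "{x. x$i = s} = {x. s \<le> x$i \<and> x$i \<le> s}" by auto
  then show ?thesis using Cn_Int_component_between[OF assms] by simp
qed

section \<open>Simple valuations and coordinate hyperplanes\<close>

lemma l1_dim_less_if_subset_hyperplane:
  assumes "X \<subseteq> {x::real^'n. x$i = t}"
  shows "l1_dim X < CARD('n)"
proof -
  let ?I = "UNIV - {i}"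
  have "X \<subseteq> (\<lambda>p. p + axis i t) ` span ((\<lambda>j. axis j 1) ` ?I)"
  proof
    fix x assume "x \<in> X"
    define v where "v = x - axis i t"
    have "v$i = 0" using \<open>x \<in> X\<close> assms by (auto simp: v_def)
    have "v = (\<Sum>j\<in>UNIV. v$j *s axis j 1)" by (simp add: basis_expansion)
    also have "\<dots> = (\<Sum>j\<in>?I. v$j *s axis j 1)"
      by (subst sum.remove[of UNIV i]) (auto simp: \<open>v$i = 0\<close>)
    finally have "v = (\<Sum>j\<in>?I. v$j *s axis j 1)" .
    then have "v \<in> span ((\<lambda>j. axis j 1) ` ?I)"
      by (metis (no_types, lifting) image_eqI span_base span_scale span_sum scalar_mult_eq_scaleR)
    moreover have "x = v + axis i t" by (simp add: v_def)
    ultimately show "x \<in> (\<lambda>p. p + axis i t) ` span ((\<lambda>j. axis j 1) ` ?I)" by blast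
  qed
  then have "l1_dim X \<le> card ?I" unfolding l1_dim_def by (intro Least_le) blast
  also have "card ?I < CARD('n)" by (simp add: card_Diff_singleton)
  finally show ?thesis .
qed

lemma negligible_component_hyperplane: "negligible {x::real^'n. x$i = s}"
  using negligible_hyperplane[of "axis i (1::real)" s] by (simp add: inner_axis')

lemma negligible_component_hyperplanes:
  assumes "finite H"
  shows "negligible {x::real^'n. \<exists>(i,t)\<in>H. x$i = t}"
proof -
  have "{x::real^'n. \<exists>(i,t)\<in>H. x$i = t} = (\<Union>(i,t)\<in>H. {x. x$i = t})" by auto
  then show ?thesis
    using assms by (auto intro!: negligible_Union simp: negligible_component_hyperplane)
qed

definition cut_additive :: "((real ^ 'n) set \<Rightarrow> real) \<Rightarrow> bool" where
  "cut_additive \<phi> \<longleftrightarrow> (\<forall>Y\<in>Cn. \<forall>i s. \<phi> Y = \<phi> (Y \<inter> {x. x$i \<le> s}) + \<phi> (Y \<inter> {x. s \<le> x$i}))"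

lemma cut_additive_measure: "cut_additive (\<lambda>X. measure lebesgue (X :: (real^'n) set))"
  unfolding cut_additive_def
proof (intro ballI allI)
  fix Y :: "(real^'n) set" and i s assume "Y \<in> Cn"
  let ?A = "Y \<inter> {x. x$i \<le> s}" and ?B = "Y \<inter> {x. s \<le> x$i}"
  have "compact Y" using \<open>Y \<in> Cn\<close> by (simp add: Cn_def)
  then have A: "?A \<in> lmeasurable" and B: "?B \<in> lmeasurable"
    by (auto intro!: lmeasurable_compact compact_Int_closed
        closed_halfspace_component_le_cart closed_halfspace_component_ge_cart)
  have "negligible (?A \<inter> ?B)"
    by (rule negligible_subset[OF negligible_component_hyperplane[of i s]]) auto
  then have "measure lebesgue (?A \<inter> ?B) = 0" by (rule negligible_imp_measure0)
  moreover have "?A \<union> ?B = Y" by auto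
  ultimately show "measure lebesgue Y = measure lebesgue ?A + measure lebesgue ?B"
    using measure_Un3[OF A B] by simp
qed

lemma hausdorff_dist_le:
  assumes "Z \<noteq> {}" "Z \<subseteq> W" "\<forall>y\<in>W. infdist y Z \<le> r" "0 \<le> r"
  shows "hausdorff_dist Z W \<le> r"
proof -
  have "(SUP x\<in>Z. infdist x W) \<le> r" "(SUP y\<in>W. infdist y Z) \<le> r"
    using assms by (auto intro!: cSUP_least)
  then show ?thesis unfolding hausdorff_dist_def by simp
qed

lemma compact_component_bounded_away:
  assumes "compact (K::(real^'n) set)" "\<forall>y\<in>K. y$i \<noteq> t"
  obtains m where "m > 0" "\<forall>y\<in>K. m \<le> \<bar>y$i - t\<bar>"
proof (cases "K = {}")
  case False
  have "continuous_on K (\<lambda>y. \<bar>y$i - t\<bar>)" by (intro continuous_intros)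
  then obtain y0 where "y0 \<in> K" "\<forall>y\<in>K. \<bar>y0$i - t\<bar> \<le> \<bar>y$i - t\<bar>"
    using continuous_attains_inf[OF assms(1) False] by blast
  then show ?thesis using assms(2) that[of "\<bar>y0$i - t\<bar>"] by auto
qed (use that[of 1] in auto)

locale simple_l1_valuation =
  fixes \<psi> :: "(real ^ 'n::finite) set \<Rightarrow> real"
  assumes valuation: "valuation \<psi>" and simple: "simple_valuation \<psi>"
begin

lemma empty_eq_0 [simp]: "\<psi> {} = 0"
  using valuation unfolding valuation_def by simp

lemma eq_0_if_subset_hyperplane:
  assumes "X \<in> Cn" "X \<subseteq> {x. x$i = t}"
  shows "\<psi> X = 0"
  using simple assms l1_dim_less_if_subset_hyperplane[OF assms(2)]
  unfolding simple_valuation_def by (cases "X = {}") auto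

lemma cut_additive: "cut_additive \<psi>"
  unfolding cut_additive_def
proof (intro ballI allI)
  fix Y :: "(real^'n) set" and i s assume Y: "Y \<in> Cn"
  let ?A = "Y \<inter> {x. x$i \<le> s}" and ?B = "Y \<inter> {x. s \<le> x$i}"
  have "?A \<in> Cn" "?B \<in> Cn" using Y by (simp_all add: Cn_Int_component_le Cn_Int_component_ge)
  moreover have "?A \<inter> ?B = Y \<inter> {x. x$i = s}" by auto
  moreover have "Y \<inter> {x. x$i = s} \<in> Cn" using Y by (rule Cn_Int_component_eq)
  moreover have "?A \<union> ?B = Y" by auto
  ultimately have "\<psi> Y = \<psi> ?A + \<psi> ?B - \<psi> (Y \<inter> {x. x$i = s})"
    using valuation Y unfolding valuation_def by metis
  moreover have "\<psi> (Y \<inter> {x. x$i = s}) = 0"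
    using \<open>Y \<inter> {x. x$i = s} \<in> Cn\<close> by (rule eq_0_if_subset_hyperplane[where i=i and t=s]) auto
  ultimately show "\<psi> Y = \<psi> ?A + \<psi> ?B" by simp
qed

end

locale continuous_simple_l1_valuation = simple_l1_valuation \<psi>
  for \<psi> :: "(real ^ 'n::finite) set \<Rightarrow> real" +
  assumes continuous: "hausdorff_continuous \<psi>"
begin

text \<open>The section of Y by the hyperplane has value 0, and thin slabs around it converge to it
  in the Hausdorff metric.\<close>
lemma thin_slab_small:
  assumes Y: "Y \<in> Cn" and e: "e > 0"
  obtains \<epsilon> where "\<epsilon> > 0" "\<bar>\<psi> (Y \<inter> {x. t - \<epsilon> \<le> x$i \<and> x$i \<le> t + \<epsilon>})\<bar> < e"
proof -
  let ?S = "\<lambda>\<epsilon>. {x. t - \<epsilon> \<le> x$i \<and> x$i \<le> t + \<epsilon>}"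
  define Z where "Z = Y \<inter> {x. x$i = t}"
  have cY: "compact Y" using Y by (simp add: Cn_def)
  show ?thesis
  proof (cases "Z = {}")
    case True
    then have "\<forall>y\<in>Y. y$i \<noteq> t" by (auto simp: Z_def)
    then obtain m where m: "m > 0" "\<forall>y\<in>Y. m \<le> \<bar>y$i - t\<bar>"
      using compact_component_bounded_away[OF cY] by blast
    then have "Y \<inter> ?S (m/2) = {}" by force
    then show ?thesis using that[of "m/2"] e m by simp
  next
    case False
    have ZC: "Z \<in> Cn" unfolding Z_def using Y by (rule Cn_Int_component_eq)
    have "\<psi> Z = 0" using ZC by (rule eq_0_if_subset_hyperplane[where i=i and t=t]) (auto simp: Z_def)
    obtain d where d: "d > 0" and near: "\<And>W. W \<in> Cn \<Longrightarrow> W \<noteq> {} \<Longrightarrow> hausdorff_dist Z W < d \<Longrightarrow>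
        \<bar>\<psi> W - \<psi> Z\<bar> < e"
      using continuous ZC False e unfolding hausdorff_continuous_def by metis
    define K where "K = Y \<inter> {y. d/2 \<le> infdist y Z}"
    have "compact K" unfolding K_def
      by (rule compact_Int_closed[OF cY]) (auto intro!: closed_Collect_le continuous_intros)
    moreover have "\<forall>y\<in>K. y$i \<noteq> t" using d by (auto simp: K_def Z_def)
    ultimately obtain m where m: "m > 0" "\<forall>y\<in>K. m \<le> \<bar>y$i - t\<bar>"
      using compact_component_bounded_away by blast
    define W where "W = Y \<inter> ?S (m/2)"
    have ZW: "Z \<subseteq> W" using m by (auto simp: Z_def W_def)
    have "\<forall>y\<in>W. infdist y Z \<le> d/2"
    proof
      fix y assume "y \<in> W"
      then have "y \<notin> K" using m by (force simp: W_def)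
      then show "infdist y Z \<le> d/2" using \<open>y \<in> W\<close> by (auto simp: K_def W_def)
    qed
    then have "hausdorff_dist Z W < d" using hausdorff_dist_le[OF False ZW, of "d/2"] d by simp
    moreover have "W \<in> Cn" unfolding W_def using Y by (rule Cn_Int_component_between)
    ultimately have "\<bar>\<psi> W - \<psi> Z\<bar> < e" using near ZW False by blast
    then show ?thesis using \<open>\<psi> Z = 0\<close> that[of "m/2"] m by (simp add: W_def)
  qed
qed

lemma eq_0_if_subset_hyperplanes:
  assumes "finite H"
  shows "\<And>Y. Y \<in> Cn \<Longrightarrow> Y \<subseteq> {x. \<exists>(i,t)\<in>H. x$i = t} \<Longrightarrow> \<psi> Y = 0"
  using assms
proof (induction H rule: finite_induct)
  case empty
  then show ?case by simp
next
  case (insert p H)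
  obtain i t where p: "p = (i,t)" by fastforce
  let ?S = "\<lambda>\<epsilon>. {x. t - \<epsilon> \<le> x$i \<and> x$i \<le> t + \<epsilon>}"
  text \<open>Cutting Y at t - \<epsilon> and t + \<epsilon> leaves two outer pieces covered by the hyperplanes of H.\<close>
  have "\<psi> Y = \<psi> (Y \<inter> ?S \<epsilon>)" if "\<epsilon> > 0" for \<epsilon>
  proof -
    let ?L = "Y \<inter> {x. x$i \<le> t - \<epsilon>}" and ?R = "Y \<inter> {x. t - \<epsilon> \<le> x$i}"
    have RC: "?R \<in> Cn" using insert.prems(1) by (rule Cn_Int_component_ge)
    have "\<psi> Y = \<psi> ?L + \<psi> ?R" "\<psi> ?R = \<psi> (?R \<inter> {x. x$i \<le> t + \<epsilon>}) + \<psi> (?R \<inter> {x. t + \<epsilon> \<le> x$i})"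
      using cut_additive insert.prems(1) RC unfolding cut_additive_def by blast+
    moreover have "\<psi> ?L = 0"
      using insert.prems that p by (intro insert.IH Cn_Int_component_le) force+
    moreover have "\<psi> (?R \<inter> {x. t + \<epsilon> \<le> x$i}) = 0"
      using insert.prems that p RC by (intro insert.IH Cn_Int_component_ge) force+
    moreover have "?R \<inter> {x. x$i \<le> t + \<epsilon>} = Y \<inter> ?S \<epsilon>" by auto
    ultimately show ?thesis by simp
  qed
  then have "\<bar>\<psi> Y\<bar> < e" if "e > 0" for e
    using thin_slab_small[OF insert.prems(1) that, of t i] by metis
  then show "\<psi> Y = 0" by (metis zero_less_abs_iff less_irrefl)
qed

end

section \<open>Grid decompositions\<close>

lemma cut_additive_slabs:
  assumes cut: "cut_additive \<phi>" and W: "W \<in> Cn" and W_lo: "W \<subseteq> {x. lo \<le> x$j}" and \<delta>: "0 \<le> \<delta>"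
  shows "\<phi> (W \<inter> {x. x$j \<le> lo + \<delta> * real (Suc N)}) =
         (\<Sum>l<Suc N. \<phi> (W \<inter> {x. lo + \<delta> * real l \<le> x$j \<and> x$j \<le> lo + \<delta> * (real l + 1)}))"
proof (induction N)
  case 0
  have "W \<inter> {x. x$j \<le> lo + \<delta> * real (Suc 0)} = W \<inter> {x. lo + \<delta> * real 0 \<le> x$j \<and> x$j \<le> lo + \<delta> * (real 0 + 1)}"
    using W_lo by auto
  then show ?case by simp
next
  case (Suc N)
  let ?s = "lo + \<delta> * real (Suc N)"
  let ?W = "W \<inter> {x. x$j \<le> lo + \<delta> * real (Suc (Suc N))}"
  have "?W \<in> Cn" using W by (rule Cn_Int_component_le)
  then have "\<phi> ?W = \<phi> (?W \<inter> {x. x$j \<le> ?s}) + \<phi> (?W \<inter> {x. ?s \<le> x$j})"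
    using cut unfolding cut_additive_def by blast
  moreover have "?W \<inter> {x. x$j \<le> ?s} = W \<inter> {x. x$j \<le> ?s}"
    using mult_left_mono[OF _ \<delta>, of "real (Suc N)" "real (Suc (Suc N))"] by auto
  moreover have "?W \<inter> {x. ?s \<le> x$j} =
      W \<inter> {x. lo + \<delta> * real (Suc N) \<le> x$j \<and> x$j \<le> lo + \<delta> * (real (Suc N) + 1)}"
    by (auto simp: algebra_simps)
  ultimately show ?case using Suc.IH by simp
qed

text \<open>In a partial grid cell only the coordinates in S are subdivided; the others range over
  the whole side [a_i, a_i + \<delta> N] of the box.\<close>
definition partial_grid_cell :: "real^'n \<Rightarrow> real \<Rightarrow> nat \<Rightarrow> 'n set \<Rightarrow> ('n \<Rightarrow> nat) \<Rightarrow> (real^'n) set" where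
  "partial_grid_cell a \<delta> N S m =
     cbox (\<chi> i. if i \<in> S then a$i + \<delta> * real (m i) else a$i)
          (\<chi> i. if i \<in> S then a$i + \<delta> * (real (m i) + 1) else a$i + \<delta> * real N)"

definition grid_cell :: "real^'n \<Rightarrow> real \<Rightarrow> ('n \<Rightarrow> nat) \<Rightarrow> (real^'n) set" where
  "grid_cell a \<delta> m = cbox (\<chi> i. a$i + \<delta> * real (m i)) (\<chi> i. a$i + \<delta> * (real (m i) + 1))"

definition partial_grid_indices :: "nat \<Rightarrow> 'n set \<Rightarrow> ('n \<Rightarrow> nat) set" where
  "partial_grid_indices N S = {m. \<forall>i. (i \<in> S \<longrightarrow> m i < N) \<and> (i \<notin> S \<longrightarrow> m i = 0)}"

lemma mem_partial_grid_cell: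
  "x \<in> partial_grid_cell a \<delta> N S m \<longleftrightarrow>
    (\<forall>i. if i \<in> S then a$i + \<delta> * real (m i) \<le> x$i \<and> x$i \<le> a$i + \<delta> * (real (m i) + 1)
         else a$i \<le> x$i \<and> x$i \<le> a$i + \<delta> * real N)"
  by (simp add: partial_grid_cell_def mem_box_cart if_bool_eq_conj)

lemma partial_grid_cell_insert:
  fixes a :: "real^'n"
  assumes j: "j \<notin> S" and "l < N" "0 \<le> \<delta>"
  shows "partial_grid_cell a \<delta> N S m \<inter> {x. a$j + \<delta> * real l \<le> x$j \<and> x$j \<le> a$j + \<delta> * (real l + 1)}
       = partial_grid_cell a \<delta> N (insert j S) (m(j := l))"
proof (rule set_eqI)
  fix x :: "real^'n"
  define C where "C S m i \<longleftrightarrow> (if i \<in> S then a$i + \<delta> * real (m i) \<le> x$i \<and> x$i \<le> a$i + \<delta> * (real (m i) + 1)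
         else a$i \<le> x$i \<and> x$i \<le> a$i + \<delta> * real N)" for S m i
  have "0 \<le> \<delta> * real l" "\<delta> * (real l + 1) \<le> \<delta> * real N"
    using assms by (auto intro: mult_left_mono)
  then have Cj: "C (insert j S) (m(j := l)) j \<Longrightarrow> C S m j"
    using j unfolding C_def by auto
  have other: "C (insert j S) (m(j := l)) i \<longleftrightarrow> C S m i" if "i \<noteq> j" for i
    using that unfolding C_def by simp
  have "(\<forall>i. C S m i) \<and> C (insert j S) (m(j := l)) j \<longleftrightarrow> (\<forall>i. C (insert j S) (m(j := l)) i)"
    using Cj other by metis
  then show "x \<in> partial_grid_cell a \<delta> N S m \<inter> {x. a$j + \<delta> * real l \<le> x$j \<and> x$j \<le> a$j + \<delta> * (real l + 1)}
       \<longleftrightarrow> x \<in> partial_grid_cell a \<delta> N (insert j S) (m(j := l))"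
    unfolding mem_partial_grid_cell Int_iff mem_Collect_eq C_def[symmetric] by (simp add: C_def)
qed

lemma mem_partial_grid_cell_unrefined:
  "x \<in> partial_grid_cell a \<delta> N S m \<Longrightarrow> j \<notin> S \<Longrightarrow> a$j \<le> x$j \<and> x$j \<le> a$j + \<delta> * real N"
  unfolding mem_partial_grid_cell by (drule spec[of _ j]) simp

lemma sum_partial_grid_indices_insert:
  assumes "j \<notin> S"
  shows "(\<Sum>m\<in>partial_grid_indices N S. \<Sum>l<N. f (m(j:=l))) = (\<Sum>m\<in>partial_grid_indices N (insert j S). f m)"
proof -
  have "(\<Sum>m\<in>partial_grid_indices N S. \<Sum>l<N. f (m(j:=l))) =
      (\<Sum>(m,l)\<in>partial_grid_indices N S \<times> {..<N}. f (m(j:=l)))"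
    by (rule sum.cartesian_product)
  also have "\<dots> = (\<Sum>m\<in>partial_grid_indices N (insert j S). f m)"
  proof (rule sum.reindex_bij_witness[where i="\<lambda>m. (m(j:=0), m j)" and j="\<lambda>(m,l). m(j:=l)"])
    fix p assume "p \<in> partial_grid_indices N S \<times> {..<N}"
    then show "(\<lambda>m. (m(j:=0), m j)) ((\<lambda>(m,l). m(j:=l)) p) = p"
      and "(\<lambda>(m,l). m(j:=l)) p \<in> partial_grid_indices N (insert j S)"
      using assms by (cases p; auto simp: partial_grid_indices_def)+
    show "f ((\<lambda>(m,l). m(j:=l)) p) = (case p of (m,l) \<Rightarrow> f (m(j:=l)))"
      by (cases p) simp
  next
    fix m assume "m \<in> partial_grid_indices N (insert j S)"
    then show "(\<lambda>(m,l). m(j:=l)) ((\<lambda>m. (m(j:=0), m j)) m) = m"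
      and "(\<lambda>m. (m(j:=0), m j)) m \<in> partial_grid_indices N S \<times> {..<N}"
      using assms by (auto simp: partial_grid_indices_def)
  qed
  finally show ?thesis .
qed

lemma cut_additive_refine_partial_grid_cell:
  assumes cut: "cut_additive \<phi>" and Y: "Y \<in> Cn" and \<delta>: "0 \<le> \<delta>" and j: "j \<notin> S"
  shows "\<phi> (Y \<inter> partial_grid_cell a \<delta> (Suc N) S m) =
    (\<Sum>l<Suc N. \<phi> (Y \<inter> partial_grid_cell a \<delta> (Suc N) (insert j S) (m(j:=l))))"
proof -
  let ?N = "Suc N"
  let ?B = "\<lambda>S m. Y \<inter> partial_grid_cell a \<delta> ?N S m"
  have BC: "?B S m \<in> Cn" using Y by (simp add: partial_grid_cell_def Cn_Int_cbox)
  have "a$j \<le> x$j \<and> x$j \<le> a$j + \<delta> * real ?N" if "x \<in> ?B S m" for x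
    using mem_partial_grid_cell_unrefined[OF _ j, of x a \<delta> ?N m] that by blast
  then have lo: "?B S m \<subseteq> {x. a$j \<le> x$j}" and hi: "?B S m \<inter> {x. x$j \<le> a$j + \<delta> * real ?N} = ?B S m"
    by auto
  have "\<phi> (?B S m) = \<phi> (?B S m \<inter> {x. x$j \<le> a$j + \<delta> * real ?N})"
    unfolding hi ..
  also have "\<dots> =
      (\<Sum>l<?N. \<phi> (?B S m \<inter> {x. a$j + \<delta> * real l \<le> x$j \<and> x$j \<le> a$j + \<delta> * (real l + 1)}))"
    by (rule cut_additive_slabs[OF cut BC lo \<delta>])
  also have "\<dots> = (\<Sum>l<?N. \<phi> (?B (insert j S) (m(j:=l))))"
  proof (rule sum.cong[OF refl])
    fix l assume "l \<in> {..<?N}"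
    then show "\<phi> (?B S m \<inter> {x. a$j + \<delta> * real l \<le> x$j \<and> x$j \<le> a$j + \<delta> * (real l + 1)}) =
        \<phi> (?B (insert j S) (m(j:=l)))"
      using partial_grid_cell_insert[OF j _ \<delta>, where l=l and a=a and m=m] by (simp add: Int_assoc)
  qed
  finally show ?thesis .
qed

lemma cut_additive_partial_grid:
  assumes cut: "cut_additive \<phi>" and Y: "Y \<in> Cn" and \<delta>: "0 \<le> \<delta>" and S: "finite S"
    and Y_sub: "Y \<subseteq> cbox a (\<chi> i. a$i + \<delta> * real (Suc N))"
  shows "\<phi> Y = (\<Sum>m\<in>partial_grid_indices (Suc N) S. \<phi> (Y \<inter> partial_grid_cell a \<delta> (Suc N) S m))"
  using S
proof (induction S rule: finite_induct)
  case empty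
  have indices: "partial_grid_indices (Suc N) {} = {\<lambda>_. 0}"
    by (auto simp: partial_grid_indices_def)
  have "Y \<inter> partial_grid_cell a \<delta> (Suc N) {} (\<lambda>_. 0) = Y"
    using Y_sub by (auto simp: partial_grid_cell_def mem_box_cart)
  then show ?case unfolding indices by simp
next
  case (insert j S)
  have "\<phi> Y = (\<Sum>m\<in>partial_grid_indices (Suc N) S.
      \<Sum>l<Suc N. \<phi> (Y \<inter> partial_grid_cell a \<delta> (Suc N) (insert j S) (m(j:=l))))"
    using insert.IH cut_additive_refine_partial_grid_cell[OF cut Y \<delta> insert.hyps(2)] by simp
  also have "\<dots> = (\<Sum>m\<in>partial_grid_indices (Suc N) (insert j S).
      \<phi> (Y \<inter> partial_grid_cell a \<delta> (Suc N) (insert j S) m))"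
    by (rule sum_partial_grid_indices_insert[OF insert.hyps(2)])
  finally show ?case .
qed

lemma cut_additive_grid:
  assumes cut: "cut_additive \<phi>" and Y: "Y \<in> Cn" and \<delta>: "0 \<le> \<delta>" and N: "N \<ge> 1"
    and Y_sub: "Y \<subseteq> cbox a (\<chi> i. a$i + \<delta> * real N)"
  shows "\<phi> Y = (\<Sum>m\<in>{m. \<forall>i. m i < N}. \<phi> (Y \<inter> grid_cell a \<delta> m))"
proof -
  obtain N' where N': "N = Suc N'" using N by (cases N) auto
  have indices: "partial_grid_indices N UNIV = {m. \<forall>i. m i < N}"
    by (auto simp: partial_grid_indices_def)
  have cells: "partial_grid_cell a \<delta> N UNIV m = grid_cell a \<delta> m" for m
    by (simp add: partial_grid_cell_def grid_cell_def)
  have "\<phi> Y = (\<Sum>m\<in>partial_grid_indices N UNIV. \<phi> (Y \<inter> partial_grid_cell a \<delta> N UNIV m))"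
    using cut_additive_partial_grid[OF cut Y \<delta>, of UNIV a N'] Y_sub N' by simp
  then show ?thesis unfolding indices cells .
qed

section \<open>Grid intervals and paths following the grid\<close>

text \<open>For \<delta> > 0 this says that s and u lie in a common closed grid interval [k \<delta>, (k + 1) \<delta>].\<close>
definition same_grid_interval :: "real \<Rightarrow> real \<Rightarrow> real \<Rightarrow> bool" where
  "same_grid_interval \<delta> s u \<longleftrightarrow> (\<forall>k::int. of_int k * \<delta> \<le> min s u \<or> max s u \<le> of_int k * \<delta>)"

lemma same_grid_interval_refl: "same_grid_interval \<delta> s s"
  unfolding same_grid_interval_def by auto

lemma same_grid_interval_uminus:
  assumes "same_grid_interval \<delta> s u"
  shows "same_grid_interval \<delta> (-s) (-u)"
  unfolding same_grid_interval_def
proof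
  fix k :: int
  have "of_int (-k) * \<delta> \<le> min s u \<or> max s u \<le> of_int (-k) * \<delta>"
    using assms unfolding same_grid_interval_def by blast
  then show "of_int k * \<delta> \<le> min (-s) (-u) \<or> max (-s) (-u) \<le> of_int k * \<delta>"
    by (auto simp flip: minus_max_eq_min minus_min_eq_max)
qed

lemma same_grid_interval_subinterval:
  assumes "same_grid_interval \<delta> a b" "min a b \<le> min c d" "max c d \<le> max a b"
  shows "same_grid_interval \<delta> c d"
  using assms order_trans unfolding same_grid_interval_def by meson

lemma same_grid_interval_between:
  assumes "same_grid_interval \<delta> x z" "same_grid_interval \<delta> x' z'" "x' \<le> x" "z \<le> z'"
    and "x' \<le> w" "w \<le> x" "z \<le> v" "v \<le> z'"
  shows "same_grid_interval \<delta> w v"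
  unfolding same_grid_interval_def
proof
  fix k :: int
  have "of_int k * \<delta> \<le> min x z \<or> max x z \<le> of_int k * \<delta>"
    and "of_int k * \<delta> \<le> min x' z' \<or> max x' z' \<le> of_int k * \<delta>"
    using assms(1,2) unfolding same_grid_interval_def by blast+
  then show "of_int k * \<delta> \<le> min w v \<or> max w v \<le> of_int k * \<delta>"
    using assms(3-) unfolding min_def max_def by (smt (verit))
qed

lemma same_grid_interval_dist:
  assumes "0 < \<delta>" "same_grid_interval \<delta> s u"
  shows "\<bar>s - u\<bar> \<le> \<delta>"
proof -
  define t where "t = min s u / \<delta>"
  define k where "k = \<lfloor>t\<rfloor> + 1"
  have "t < of_int k" "of_int k \<le> t + 1" unfolding k_def by linarith+
  then have "min s u < of_int k * \<delta>" "of_int k * \<delta> \<le> min s u + \<delta>"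
    using assms(1) by (simp_all add: t_def field_simps)
  moreover have "of_int k * \<delta> \<le> min s u \<or> max s u \<le> of_int k * \<delta>"
    using assms(2) unfolding same_grid_interval_def by blast
  ultimately show ?thesis by (auto simp: min_def max_def split: if_splits)
qed

lemma same_grid_interval_half:
  assumes "same_grid_interval (\<delta> / 2) s u"
  shows "same_grid_interval \<delta> s u"
  unfolding same_grid_interval_def
proof
  fix k :: int
  show "of_int k * \<delta> \<le> min s u \<or> max s u \<le> of_int k * \<delta>"
    using assms[unfolded same_grid_interval_def, rule_format, of "2 * k"] by simp
qed

text \<open>A point u interior to the grid interval [j \<delta>, (j + 1) \<delta>] can only be related to
  points of that closed interval; so s is related to every point of it.\<close>
lemma same_grid_interval_cell:
  assumes "0 < \<delta>" "same_grid_interval \<delta> s u"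
    and "of_int j * \<delta> < u" "u < (of_int j + 1) * \<delta>"
    and "of_int j * \<delta> \<le> w" "w \<le> (of_int j + 1) * \<delta>"
  shows "same_grid_interval \<delta> s w"
  unfolding same_grid_interval_def
proof
  fix k :: int
  have "k \<le> j \<or> j + 1 \<le> k" by linarith
  then have "real_of_int k \<le> of_int j \<or> of_int j + 1 \<le> real_of_int k"
    by (metis of_int_add of_int_le_iff of_int_1)
  then have "of_int k * \<delta> \<le> of_int j * \<delta> \<or> (of_int j + 1) * \<delta> \<le> of_int k * \<delta>"
    using assms(1) by (auto intro: mult_right_mono)
  moreover have "of_int k * \<delta> \<le> min s u \<or> max s u \<le> of_int k * \<delta>"
    using assms(2) unfolding same_grid_interval_def by blast
  ultimately show "of_int k * \<delta> \<le> min s w \<or> max s w \<le> of_int k * \<delta>"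
    using assms(3-) unfolding min_def max_def by (smt (verit))
qed

lemma closed_same_grid_interval:
  "closed {p :: (real^'n) \<times> (real^'n). \<forall>i. same_grid_interval \<delta> (fst p $ i) (snd p $ i)}"
  unfolding same_grid_interval_def
  by (intro closed_Collect_all closed_Collect_disj; intro closed_Collect_le continuous_intros)

lemma same_grid_interval_towards:
  assumes "same_grid_interval \<delta> a b" "min a b \<le> c" "c \<le> max a b"
  shows "same_grid_interval \<delta> a c"
  using assms by (intro same_grid_interval_subinterval[OF assms(1)]) auto

lemma same_grid_interval_clamp:
  assumes "same_grid_interval \<delta> x z" "same_grid_interval \<delta> x' z'" "x \<le> w" "w \<le> x'" "z \<le> z'"
  shows "same_grid_interval \<delta> w (max z (min z' w))"
proof -
  consider "w \<le> z" | "z' \<le> w" | "z < w" "w < z'" by linarith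
  then show ?thesis
  proof cases
    case 1
    then show ?thesis
      using same_grid_interval_subinterval[OF assms(1), of w z] assms(3,5) by simp
  next
    case 2
    then show ?thesis
      using same_grid_interval_subinterval[OF assms(2), of w z'] assms(4,5) by simp
  qed (simp add: same_grid_interval_refl)
qed

text \<open>While p (ramp t) rests at p 0 for t \<le> 1/3 and at p 1 for t \<ge> 2/3, a path shadowing it
  has time to leave z and to reach z'.\<close>
definition ramp :: "real \<Rightarrow> real" where
  "ramp t = max 0 (min 1 (3 * t - 1))"

lemma ramp_range: "0 \<le> ramp t" "ramp t \<le> 1"
  unfolding ramp_def by auto

lemma ramp_mono: "t \<le> t' \<Longrightarrow> ramp t \<le> ramp t'"
  unfolding ramp_def by auto

lemma continuous_on_compose_ramp:
  "continuous_on {0..1} p \<Longrightarrow> continuous_on {0..1} (\<lambda>t. p (ramp t))"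
  by (rule continuous_on_compose2[of _ p]) (auto simp: ramp_def ramp_range intro!: continuous_intros)

text \<open>Squeezing a path c that runs in [z, z'] between the two lines through (0, z) and (1, z')
  of slope 3 (z' - z): it starts at z, ends at z', and equals c on [1/3, 2/3].\<close>
definition squeeze :: "real \<Rightarrow> real \<Rightarrow> real \<Rightarrow> real \<Rightarrow> real" where
  "squeeze z z' c t = max (min c (z + 3 * (t * (z' - z)))) (z' - 3 * ((1 - t) * (z' - z)))"

lemma squeeze_mono:
  assumes "z \<le> c" "c \<le> c'" "c' \<le> z'" "0 \<le> t" "t \<le> t'" "t' \<le> 1"
  shows "z \<le> squeeze z z' c t \<and> squeeze z z' c t \<le> squeeze z z' c' t' \<and> squeeze z z' c' t' \<le> z'"
proof -
  have "t * (z' - z) \<le> t' * (z' - z)" "(1 - t') * (z' - z) \<le> (1 - t) * (z' - z)"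
    "0 \<le> t * (z' - z)" "0 \<le> (1 - t') * (z' - z)"
    using assms by (auto intro: mult_right_mono)
  then show ?thesis unfolding squeeze_def using assms by (simp; linarith)
qed

lemma squeeze_early:
  assumes "z \<le> c" "c \<le> z'" "0 \<le> t" "t \<le> 1/3"
  shows "z \<le> squeeze z z' c t \<and> squeeze z z' c t \<le> c"
proof -
  have "2 * (z' - z) \<le> 3 * ((1 - t) * (z' - z))"
    using mult_right_mono[of 2 "3 * (1 - t)" "z' - z"] assms by (simp add: algebra_simps)
  moreover have "0 \<le> t * (z' - z)" using assms by simp
  ultimately show ?thesis unfolding squeeze_def using assms by (simp; linarith)
qed

lemma squeeze_late:
  assumes "z \<le> c" "c \<le> z'" "2/3 \<le> t" "t \<le> 1"
  shows "c \<le> squeeze z z' c t \<and> squeeze z z' c t \<le> z'"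
proof -
  have "2 * (z' - z) \<le> 3 * (t * (z' - z))"
    using mult_right_mono[of 2 "3 * t" "z' - z"] assms by (simp add: algebra_simps)
  moreover have "0 \<le> (1 - t) * (z' - z)" using assms by simp
  ultimately show ?thesis unfolding squeeze_def using assms by (simp; linarith)
qed

lemma squeeze_middle:
  assumes "z \<le> c" "c \<le> z'" "1/3 \<le> t" "t \<le> 2/3"
  shows "squeeze z z' c t = c"
proof -
  have "z' - z \<le> 3 * (t * (z' - z))" "z' - z \<le> 3 * ((1 - t) * (z' - z))"
    using mult_right_mono[of 1 "3 * t" "z' - z"] mult_right_mono[of 1 "3 * (1 - t)" "z' - z"] assms
    by (auto simp: algebra_simps)
  then show ?thesis unfolding squeeze_def using assms by (simp; linarith)
qed

lemma grid_path_aligned: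
  assumes cp: "continuous_on {0..1} p" and p0: "p 0 = x" and p1: "p 1 = x'"
    and mono: "\<And>t t'. 0 \<le> t \<Longrightarrow> t \<le> t' \<Longrightarrow> t' \<le> 1 \<Longrightarrow> x \<le> p t \<and> p t \<le> p t' \<and> p t' \<le> x'"
    and R: "same_grid_interval \<delta> x z" "same_grid_interval \<delta> x' z'" and z: "z \<le> z'"
  obtains q where "continuous_on {0..1} q" "q 0 = z" "q 1 = z'"
    "\<forall>t\<in>{0..1}. same_grid_interval \<delta> (p (ramp t)) (q t)"
    "\<forall>t t'. 0 \<le> t \<longrightarrow> t \<le> t' \<longrightarrow> t' \<le> 1 \<longrightarrow> z \<le> q t \<and> q t \<le> q t' \<and> q t' \<le> z'"
proof -
  define c where "c t = max z (min z' (p (ramp t)))" for t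
  define q where "q t = squeeze z z' (c t) t" for t
  have c_range: "z \<le> c t" "c t \<le> z'" for t using z by (auto simp: c_def)
  have w: "x \<le> p (ramp t) \<and> p (ramp t) \<le> x'" for t using mono[of "ramp t" "ramp t"] ramp_range[of t] by auto
  have "continuous_on {0..1} q" unfolding q_def c_def squeeze_def
    by (intro continuous_intros continuous_on_compose_ramp cp)
  moreover have "q 0 = z" "q 1 = z'" using c_range[of 0] c_range[of 1] by (simp_all add: q_def squeeze_def)
  moreover have "z \<le> q t \<and> q t \<le> q t' \<and> q t' \<le> z'" if t: "0 \<le> t" "t \<le> t'" "t' \<le> 1" for t t'
  proof -
    have "p (ramp t) \<le> p (ramp t')" using mono[of "ramp t" "ramp t'"] ramp_mono[OF t(2)] ramp_range by auto
    then have "c t \<le> c t'" by (auto simp: c_def)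
    then show ?thesis unfolding q_def using squeeze_mono c_range t by blast
  qed
  moreover have "same_grid_interval \<delta> (p (ramp t)) (q t)" if t: "0 \<le> t" "t \<le> 1" for t
  proof -
    consider "t \<le> 1/3" | "2/3 \<le> t" | "1/3 \<le> t" "t \<le> 2/3" by linarith
    then show ?thesis
    proof cases
      case 1
      then have "ramp t = 0" by (simp add: ramp_def)
      moreover have "z \<le> q t \<and> q t \<le> c t" unfolding q_def using squeeze_early c_range t 1 by blast
      ultimately have "min x z \<le> q t" "q t \<le> max x z" using p0 by (auto simp: c_def)
      then show ?thesis using same_grid_interval_towards[OF R(1)] \<open>ramp t = 0\<close> p0 by simp
    next
      case 2
      then have "ramp t = 1" by (simp add: ramp_def)
      moreover have "c t \<le> q t \<and> q t \<le> z'" unfolding q_def using squeeze_late c_range t 2 by blast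
      ultimately have "min x' z' \<le> q t" "q t \<le> max x' z'" using p1 by (auto simp: c_def)
      then show ?thesis using same_grid_interval_towards[OF R(2)] \<open>ramp t = 1\<close> p1 by simp
    next
      case 3
      then have "q t = c t" unfolding q_def using squeeze_middle c_range by blast
      then show ?thesis using same_grid_interval_clamp[OF R _ _ z] w[of t] by (simp add: c_def)
    qed
  qed
  ultimately show ?thesis using that by (simp only: Ball_def atLeastAtMost_iff) blast
qed

lemma grid_path_opposed:
  assumes p0: "p 0 = x" and p1: "p 1 = x'"
    and mono: "\<And>t t'. 0 \<le> t \<Longrightarrow> t \<le> t' \<Longrightarrow> t' \<le> 1 \<Longrightarrow> x' \<le> p t' \<and> p t' \<le> p t \<and> p t \<le> x"
    and R: "same_grid_interval \<delta> x z" "same_grid_interval \<delta> x' z'" and z: "z \<le> z'"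
  obtains q where "continuous_on {0..1} q" "q 0 = z" "q 1 = z'"
    "\<forall>t\<in>{0..1}. same_grid_interval \<delta> (p (ramp t)) (q t)"
    "\<forall>t t'. 0 \<le> t \<longrightarrow> t \<le> t' \<longrightarrow> t' \<le> 1 \<longrightarrow> z \<le> q t \<and> q t \<le> q t' \<and> q t' \<le> z'"
proof -
  define q where "q t = z + t * (z' - z)" for t
  have q_mono: "z \<le> q t \<and> q t \<le> q t' \<and> q t' \<le> z'" if "0 \<le> t" "t \<le> t'" "t' \<le> 1" for t t'
    using in_order_linear[OF that, of z "z' - z"] z unfolding q_def in_order_def by auto
  have "x' \<le> x" using mono[of 0 1] by auto
  have "same_grid_interval \<delta> (p (ramp t)) (q t)" if "0 \<le> t" "t \<le> 1" for t
    using same_grid_interval_between[OF R \<open>x' \<le> x\<close> z] mono[of "ramp t" "ramp t"] ramp_range[of t]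
      q_mono[of t t] that by auto
  then show ?thesis
  proof (intro that ballI)
    show "continuous_on {0..1} q" "q 0 = z" "q 1 = z'"
      unfolding q_def by (auto intro!: continuous_intros)
  qed (use q_mono in auto)
qed

lemma grid_path_increasing:
  assumes cp: "continuous_on {0..1} p" and p0: "p 0 = x" and p1: "p 1 = x'"
    and mono: "\<And>t t'. 0 \<le> t \<Longrightarrow> t \<le> t' \<Longrightarrow> t' \<le> 1 \<Longrightarrow> in_order x (p t) (p t') x'"
    and R: "same_grid_interval \<delta> x z" "same_grid_interval \<delta> x' z'" and z: "z \<le> z'"
  obtains q where "continuous_on {0..1} q" "q 0 = z" "q 1 = z'"
    "\<forall>t\<in>{0..1}. same_grid_interval \<delta> (p (ramp t)) (q t)"
    "\<forall>t t'. 0 \<le> t \<longrightarrow> t \<le> t' \<longrightarrow> t' \<le> 1 \<longrightarrow> in_order z (q t) (q t') z'"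
proof -
  obtain q where "continuous_on {0..1} q" "q 0 = z" "q 1 = z'"
    "\<forall>t\<in>{0..1}. same_grid_interval \<delta> (p (ramp t)) (q t)"
    "\<forall>t t'. 0 \<le> t \<longrightarrow> t \<le> t' \<longrightarrow> t' \<le> 1 \<longrightarrow> z \<le> q t \<and> q t \<le> q t' \<and> q t' \<le> z'"
  proof (cases "x \<le> x'")
    case True
    have mono': "x \<le> p t \<and> p t \<le> p t' \<and> p t' \<le> x'" if "0 \<le> t" "t \<le> t'" "t' \<le> 1" for t t'
      using in_order_le[OF mono[OF that] True] .
    show ?thesis by (rule grid_path_aligned[OF cp p0 p1 mono' R z]) (assumption | rule that)+
  next
    case False
    then have "x' \<le> x" by linarith
    have mono': "x' \<le> p t' \<and> p t' \<le> p t \<and> p t \<le> x" if "0 \<le> t" "t \<le> t'" "t' \<le> 1" for t t'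
      using in_order_ge[OF mono[OF that] \<open>x' \<le> x\<close>] .
    show ?thesis by (rule grid_path_opposed[OF p0 p1 mono' R z]) (assumption | rule that)+
  qed
  then show ?thesis by (intro that) (auto simp: in_order_def)
qed

lemma grid_path:
  assumes cp: "continuous_on {0..1} p" and p0: "p 0 = x" and p1: "p 1 = x'"
    and mono: "\<And>t t'. 0 \<le> t \<Longrightarrow> t \<le> t' \<Longrightarrow> t' \<le> 1 \<Longrightarrow> in_order x (p t) (p t') x'"
    and R: "same_grid_interval \<delta> x z" "same_grid_interval \<delta> x' z'"
  obtains q where "continuous_on {0..1} q" "q 0 = z" "q 1 = z'"
    "\<forall>t\<in>{0..1}. same_grid_interval \<delta> (p (ramp t)) (q t)"
    "\<forall>t t'. 0 \<le> t \<longrightarrow> t \<le> t' \<longrightarrow> t' \<le> 1 \<longrightarrow> in_order z (q t) (q t') z'"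
proof (cases "z \<le> z'")
  case True
  show ?thesis by (rule grid_path_increasing[OF assms True]) (assumption | rule that)+
next
  case False
  have cp': "continuous_on {0..1} (\<lambda>t. - p t)" by (intro continuous_intros cp)
  have mono': "in_order (-x) (- p t) (- p t') (-x')" if "0 \<le> t" "t \<le> t'" "t' \<le> 1" for t t'
    using mono[OF that] by simp
  have p0': "- p 0 = -x" and p1': "- p 1 = -x'" and z': "-z \<le> -z'" using p0 p1 False by auto
  obtain q where q: "continuous_on {0..1} q" "q 0 = -z" "q 1 = -z'"
    "\<forall>t\<in>{0..1}. same_grid_interval \<delta> (- p (ramp t)) (q t)"
    "\<forall>t t'. 0 \<le> t \<longrightarrow> t \<le> t' \<longrightarrow> t' \<le> 1 \<longrightarrow> in_order (-z) (q t) (q t') (-z')"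
    by (rule grid_path_increasing[OF cp' p0' p1' mono' same_grid_interval_uminus[OF R(1)]
        same_grid_interval_uminus[OF R(2)] z']) assumption+
  show ?thesis
  proof (rule that[of "\<lambda>t. - q t"])
    show "continuous_on {0..1} (\<lambda>t. - q t)" by (intro continuous_intros q(1))
    show "- q 0 = z" "- q 1 = z'" using q by auto
    show "\<forall>t\<in>{0..1}. same_grid_interval \<delta> (p (ramp t)) (- q t)"
      using q(4) same_grid_interval_uminus[of \<delta> "- p (ramp t)" "q t" for t] by simp
    show "\<forall>t t'. 0 \<le> t \<longrightarrow> t \<le> t' \<longrightarrow> t' \<le> 1 \<longrightarrow> in_order z (- q t) (- q t') z'"
      using q(5) in_order_uminus[of z "- q t" "- q t'" z' for t t'] by simp
  qed
qed

section \<open>Grid hulls\<close>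

text \<open>For \<delta> > 0, the union of the closed grid cubes of side \<delta> that meet X.\<close>
definition grid_hull :: "real \<Rightarrow> (real^'n) set \<Rightarrow> (real^'n) set" where
  "grid_hull \<delta> X = {y. \<exists>x\<in>X. \<forall>i. same_grid_interval \<delta> (x$i) (y$i)}"

lemma subset_grid_hull: "X \<subseteq> grid_hull \<delta> X"
  unfolding grid_hull_def using same_grid_interval_refl by blast

lemma grid_path_vector:
  fixes p :: "real \<Rightarrow> real^'n"
  assumes cp: "continuous_on {0..1} p" and p0: "p 0 = x" and p1: "p 1 = x'"
    and mono: "\<And>t t' i. 0 \<le> t \<Longrightarrow> t \<le> t' \<Longrightarrow> t' \<le> 1 \<Longrightarrow> in_order (x$i) (p t $ i) (p t' $ i) (x'$i)"
    and R: "\<forall>i. same_grid_interval \<delta> (x$i) (z$i)" "\<forall>i. same_grid_interval \<delta> (x'$i) (z'$i)"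
  obtains q where "continuous_on {0..1} q" "q 0 = z" "q 1 = z'"
    "\<And>t i. t \<in> {0..1} \<Longrightarrow> same_grid_interval \<delta> (p (ramp t) $ i) (q t $ i)"
    "\<And>t t' i. 0 \<le> t \<Longrightarrow> t \<le> t' \<Longrightarrow> t' \<le> 1 \<Longrightarrow> in_order (z$i) (q t $ i) (q t' $ i) (z'$i)"
proof -
  have "\<forall>i. \<exists>q. continuous_on {0..1} q \<and> q 0 = z$i \<and> q 1 = z'$i \<and>
      (\<forall>t\<in>{0..1}. same_grid_interval \<delta> (p (ramp t) $ i) (q t)) \<and>
      (\<forall>t t'. 0 \<le> t \<longrightarrow> t \<le> t' \<longrightarrow> t' \<le> 1 \<longrightarrow> in_order (z$i) (q t) (q t') (z'$i))"
  proof
    fix i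
    have cpi: "continuous_on {0..1} (\<lambda>t. p t $ i)" by (intro continuous_intros cp)
    obtain q where "continuous_on {0..1} q" "q 0 = z$i" "q 1 = z'$i"
      "\<forall>t\<in>{0..1}. same_grid_interval \<delta> (p (ramp t) $ i) (q t)"
      "\<forall>t t'. 0 \<le> t \<longrightarrow> t \<le> t' \<longrightarrow> t' \<le> 1 \<longrightarrow> in_order (z$i) (q t) (q t') (z'$i)"
      by (rule grid_path[OF cpi _ _ mono R(1)[rule_format] R(2)[rule_format]])
        (assumption | simp add: p0 p1)+
    then show "\<exists>q. continuous_on {0..1} q \<and> q 0 = z$i \<and> q 1 = z'$i \<and>
      (\<forall>t\<in>{0..1}. same_grid_interval \<delta> (p (ramp t) $ i) (q t)) \<and>
      (\<forall>t t'. 0 \<le> t \<longrightarrow> t \<le> t' \<longrightarrow> t' \<le> 1 \<longrightarrow> in_order (z$i) (q t) (q t') (z'$i))"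
      by blast
  qed
  then obtain Q where Q: "\<And>i. continuous_on {0..1} (Q i)" "\<And>i. Q i 0 = z$i" "\<And>i. Q i 1 = z'$i"
    "\<And>i t. t \<in> {0..1} \<Longrightarrow> same_grid_interval \<delta> (p (ramp t) $ i) (Q i t)"
    "\<And>i t t'. 0 \<le> t \<Longrightarrow> t \<le> t' \<Longrightarrow> t' \<le> 1 \<Longrightarrow> in_order (z$i) (Q i t) (Q i t') (z'$i)"
    unfolding choice_iff by blast
  show ?thesis
  proof (rule that[of "\<lambda>t. \<chi> i. Q i t"])
    show "continuous_on {0..1} (\<lambda>t. \<chi> i. Q i t)" by (intro continuous_intros Q(1))
    show "(\<chi> i. Q i 0) = z" "(\<chi> i. Q i 1) = z'" using Q(2,3) by (auto simp: vec_eq_iff)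
  qed (simp_all add: Q(4,5))
qed

lemma l1_convex_grid_hull:
  assumes X: "l1_convex X"
  shows "l1_convex (grid_hull \<delta> X)"
proof (rule l1_convexI)
  fix z z' assume "z \<in> grid_hull \<delta> X" "z' \<in> grid_hull \<delta> X"
  then obtain x x' where x: "x \<in> X" "\<forall>i. same_grid_interval \<delta> (x$i) (z$i)"
    and x': "x' \<in> X" "\<forall>i. same_grid_interval \<delta> (x'$i) (z'$i)"
    unfolding grid_hull_def by blast
  obtain p where p: "monotone_path X p x x'" using l1_convexD[OF X x(1) x'(1)] .
  then have cp: "continuous_on {0..1} p" and p0: "p 0 = x" and p1: "p 1 = x'" and pX: "p ` {0..1} \<subseteq> X"
    and p_mono: "\<And>t t' i. 0 \<le> t \<Longrightarrow> t \<le> t' \<Longrightarrow> t' \<le> 1 \<Longrightarrow> in_order (x$i) (p t $ i) (p t' $ i) (x'$i)"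
    unfolding monotone_path_def by auto
  obtain q where q: "continuous_on {0..1} q" "q 0 = z" "q 1 = z'"
    "\<And>t i. t \<in> {0..1} \<Longrightarrow> same_grid_interval \<delta> (p (ramp t) $ i) (q t $ i)"
    "\<And>t t' i. 0 \<le> t \<Longrightarrow> t \<le> t' \<Longrightarrow> t' \<le> 1 \<Longrightarrow> in_order (z$i) (q t $ i) (q t' $ i) (z'$i)"
    using grid_path_vector[OF cp p0 p1 p_mono x(2) x'(2)] by blast
  have "q t \<in> grid_hull \<delta> X" if "t \<in> {0..1}" for t
  proof -
    have "p (ramp t) \<in> X" using pX ramp_range[of t] by auto
    then show ?thesis using q(4)[OF that] unfolding grid_hull_def by blast
  qed
  then have "monotone_path (grid_hull \<delta> X) q z z'"
    unfolding monotone_path_def using q by blast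
  then show "\<exists>q. monotone_path (grid_hull \<delta> X) q z z'" by blast
qed

lemma dist_le_if_same_grid_intervals:
  assumes "0 < \<delta>" "\<forall>i. same_grid_interval \<delta> (x$i) (y$i)"
  shows "dist y (x::real^'n) \<le> real CARD('n) * \<delta>"
proof -
  have "dist y x \<le> l1_dist y x" by (rule dist_le_l1_dist)
  also have "\<dots> \<le> (\<Sum>i\<in>(UNIV::'n set). \<delta>)" unfolding l1_dist_def
  proof (rule sum_mono)
    fix i
    show "\<bar>y$i - x$i\<bar> \<le> \<delta>"
      using same_grid_interval_dist[OF assms(1)] assms(2) by (metis abs_minus_commute)
  qed
  finally show ?thesis by simp
qed

lemma infdist_grid_hull_le:
  fixes X :: "(real^'n) set"
  assumes "0 < \<delta>" "y \<in> grid_hull \<delta> X"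
  shows "infdist y X \<le> real CARD('n) * \<delta>"
proof -
  obtain x where x: "x \<in> X" "\<forall>i. same_grid_interval \<delta> (x$i) (y$i)"
    using assms(2) unfolding grid_hull_def by blast
  have "infdist y X \<le> dist y x" using x(1) by (rule infdist_le)
  also have "\<dots> \<le> real CARD('n) * \<delta>" using x(2) by (rule dist_le_if_same_grid_intervals[OF assms(1)])
  finally show ?thesis .
qed

lemma compact_grid_hull:
  assumes \<delta>: "0 < \<delta>" and X: "compact (X::(real^'n) set)"
  shows "compact (grid_hull \<delta> X)"
proof -
  define K where "K = (X \<times> UNIV) \<inter> {p::(real^'n) \<times> (real^'n). \<forall>i. same_grid_interval \<delta> (fst p $ i) (snd p $ i)}"
  have "closed K" unfolding K_def
    using X by (intro closed_Int closed_Times closed_same_grid_interval) (auto intro: compact_imp_closed)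
  obtain B where B: "\<forall>x\<in>X. norm x \<le> B" using compact_imp_bounded[OF X] unfolding bounded_iff by blast
  have "K \<subseteq> X \<times> cball 0 (B + real CARD('n) * \<delta>)"
  proof
    fix p assume "p \<in> K"
    then obtain x y where p: "p = (x,y)" "x \<in> X" "\<forall>i. same_grid_interval \<delta> (x$i) (y$i)"
      unfolding K_def by auto
    have "norm y \<le> norm x + dist y x" using norm_triangle_ineq[of x "y - x"] by (simp add: dist_norm)
    moreover have "norm x \<le> B" using B p(2) by blast
    ultimately have "norm y \<le> B + real CARD('n) * \<delta>"
      using dist_le_if_same_grid_intervals[OF \<delta> p(3)] by linarith
    then show "p \<in> X \<times> cball 0 (B + real CARD('n) * \<delta>)" using p by auto
  qed
  then have "bounded K"
    by (rule bounded_subset[OF bounded_Times[OF compact_imp_bounded[OF X] bounded_cball]])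
  with \<open>closed K\<close> have "compact (snd ` K)"
    by (intro compact_continuous_image continuous_intros) (simp add: compact_eq_bounded_closed)
  moreover have "snd ` K = grid_hull \<delta> X"
  proof
    show "snd ` K \<subseteq> grid_hull \<delta> X" unfolding K_def grid_hull_def by auto
    show "grid_hull \<delta> X \<subseteq> snd ` K"
    proof
      fix y assume "y \<in> grid_hull \<delta> X"
      then obtain x where "x \<in> X" "\<forall>i. same_grid_interval \<delta> (x$i) (y$i)"
        unfolding grid_hull_def by blast
      then have "(x, y) \<in> K" unfolding K_def by simp
      then show "y \<in> snd ` K" by (metis image_eqI snd_conv)
    qed
  qed
  ultimately show ?thesis by simp
qed

lemma Cn_grid_hull: "0 < \<delta> \<Longrightarrow> X \<in> Cn \<Longrightarrow> grid_hull \<delta> X \<in> Cn"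
  unfolding Cn_def using compact_grid_hull l1_convex_grid_hull by blast

lemma hausdorff_dist_grid_hull_le:
  assumes "0 < \<delta>" "(X::(real^'n) set) \<noteq> {}"
  shows "hausdorff_dist X (grid_hull \<delta> X) \<le> real CARD('n) * \<delta>"
  using assms infdist_grid_hull_le[OF assms(1)] by (intro hausdorff_dist_le subset_grid_hull) auto

lemma grid_hull_subset_box:
  assumes \<delta>: "0 < \<delta>" and "bounded (X::(real^'n) set)"
  obtains N0 :: nat where "1 \<le> N0" "grid_hull \<delta> X \<subseteq> cbox (\<chi> i. - (real N0 * \<delta>)) (\<chi> i. real N0 * \<delta>)"
proof -
  obtain B where B: "\<forall>x\<in>X. norm x \<le> B" using assms(2) unfolding bounded_iff by blast
  define N0 where "N0 = nat \<lceil>(\<bar>B\<bar> + \<delta>) / \<delta>\<rceil>"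
  have "(\<bar>B\<bar> + \<delta>) / \<delta> \<le> real N0" unfolding N0_def by (rule real_nat_ceiling_ge)
  then have N0: "\<bar>B\<bar> + \<delta> \<le> real N0 * \<delta>" using \<delta> by (simp add: pos_divide_le_eq)
  then have "1 * \<delta> \<le> real N0 * \<delta>" by simp
  then have "1 \<le> real N0" using \<delta> by (rule mult_right_le_imp_le)
  have "grid_hull \<delta> X \<subseteq> cbox (\<chi> i. - (real N0 * \<delta>)) (\<chi> i. real N0 * \<delta>)"
  proof
    fix y assume "y \<in> grid_hull \<delta> X"
    then obtain x where x: "x \<in> X" "\<forall>i. same_grid_interval \<delta> (x$i) (y$i)"
      unfolding grid_hull_def by blast
    have "- (real N0 * \<delta>) \<le> y$i \<and> y$i \<le> real N0 * \<delta>" for i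
    proof -
      have "norm x \<le> B" using B x(1) by blast
      then have "\<bar>x$i\<bar> \<le> \<bar>B\<bar>" using component_le_norm_cart[of x i] abs_ge_self[of B] by linarith
      moreover have "\<bar>x$i - y$i\<bar> \<le> \<delta>" using x(2) by (simp add: same_grid_interval_dist[OF \<delta>])
      ultimately show ?thesis using N0 unfolding abs_le_iff by linarith
    qed
    then show "y \<in> cbox (\<chi> i. - (real N0 * \<delta>)) (\<chi> i. real N0 * \<delta>)" by (simp add: mem_box_cart)
  qed
  then show ?thesis using that \<open>1 \<le> real N0\<close> by simp
qed

definition dyadic :: "nat \<Rightarrow> real" where
  "dyadic k = 1 / 2 ^ k"

lemma dyadic_pos: "0 < dyadic k"
  unfolding dyadic_def by simp

lemma dyadic_tendsto_0: "(\<lambda>k. C * dyadic k) \<longlonglongrightarrow> 0"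
  unfolding dyadic_def using LIMSEQ_divide_realpow_zero[of 2 C] by simp

lemma decseq_grid_hull_dyadic: "decseq (\<lambda>k. grid_hull (dyadic k) X)"
proof (rule decseq_SucI)
  fix k
  have half: "dyadic (Suc k) = dyadic k / 2" unfolding dyadic_def by simp
  show "grid_hull (dyadic (Suc k)) X \<subseteq> grid_hull (dyadic k) X"
    unfolding grid_hull_def half using same_grid_interval_half by blast
qed

lemma Inter_grid_hull_dyadic:
  assumes X: "compact (X::(real^'n) set)" "X \<noteq> {}"
  shows "(\<Inter>k. grid_hull (dyadic k) X) = X"
proof
  show "X \<subseteq> (\<Inter>k. grid_hull (dyadic k) X)" using subset_grid_hull by blast
  show "(\<Inter>k. grid_hull (dyadic k) X) \<subseteq> X"
  proof
    fix y assume y: "y \<in> (\<Inter>k. grid_hull (dyadic k) X)"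
    have "infdist y X \<le> real CARD('n) * dyadic k" for k
      using y infdist_grid_hull_le[OF dyadic_pos] by blast
    then have "infdist y X \<le> 0"
      using LIMSEQ_le_const[OF dyadic_tendsto_0[of "real CARD('n)"], of "infdist y X"] by blast
    then have "y \<in> closure X" using in_closure_iff_infdist_zero[OF X(2)] infdist_nonneg[of y X] by simp
    then show "y \<in> X" using X(1) by (simp add: compact_imp_closed closure_closed)
  qed
qed

lemma measure_grid_hull_dyadic_tendsto:
  assumes X: "compact (X::(real^'n) set)" "X \<noteq> {}"
  shows "(\<lambda>k. measure lebesgue (grid_hull (dyadic k) X)) \<longlonglongrightarrow> measure lebesgue X"
proof -
  have lm: "grid_hull (dyadic k) X \<in> lmeasurable" for k
    by (rule lmeasurable_compact[OF compact_grid_hull[OF dyadic_pos X(1)]])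
  have "(\<lambda>k. measure lebesgue (grid_hull (dyadic k) X)) \<longlonglongrightarrow> measure lebesgue (\<Inter>k. grid_hull (dyadic k) X)"
  proof (rule Lim_measure_decseq)
    show "range (\<lambda>k. grid_hull (dyadic k) X) \<subseteq> sets lebesgue" using lm by (auto simp: fmeasurable_def)
    show "emeasure lebesgue (grid_hull (dyadic k) X) \<noteq> \<infinity>" for k using lm[of k] by (auto simp: fmeasurable_def)
  qed (rule decseq_grid_hull_dyadic)
  then show ?thesis using Inter_grid_hull_dyadic[OF X] by simp
qed

section \<open>Dyadic cubes\<close>

definition cube :: "real^'n \<Rightarrow> real \<Rightarrow> (real^'n) set" where
  "cube v \<delta> = cbox v (v + (\<chi> i. \<delta>))"

lemma Cn_cube: "cube v \<delta> \<in> Cn"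
  unfolding cube_def by (rule Cn_cbox)

lemma cube_translate: "cube v \<delta> = (\<lambda>x. x + v) ` cube 0 \<delta>"
  unfolding cube_def using cbox_translation[of v 0 "\<chi> i. \<delta>"] by (simp add: add.commute)

lemma measure_cube:
  assumes "0 \<le> \<delta>"
  shows "measure lebesgue (cube (v::real^'n) \<delta>) = \<delta> ^ CARD('n)"
proof -
  have "v \<in> cube v \<delta>" using assms by (simp add: cube_def mem_box_cart)
  then have "cube v \<delta> \<noteq> {}" by blast
  then have "measure lborel (cube v \<delta>) = (\<Prod>i\<in>(UNIV::'n set). \<delta>)"
    unfolding cube_def by (subst content_cbox_cart) auto
  then show ?thesis by (simp add: cube_def lmeasurable_cbox)
qed

lemma grid_cell_eq_cube: "grid_cell a \<delta> m = cube (\<chi> i. a$i + \<delta> * real (m i)) \<delta>"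
  unfolding grid_cell_def cube_def by (rule arg_cong2[where f=cbox]) (simp_all add: vec_eq_iff algebra_simps)

locale invariant_simple_l1_valuation = simple_l1_valuation \<psi>
  for \<psi> :: "(real ^ 'n::finite) set \<Rightarrow> real" +
  assumes translation_invariant: "translation_invariant \<psi>"
begin

lemma cube_translate_eq: "\<psi> (cube v \<delta>) = \<psi> (cube 0 \<delta>)"
  using translation_invariant Cn_cube unfolding translation_invariant_def cube_translate[of v] by blast

text \<open>The unit cube is the union of 2^(k n) translates of the cube of side 2^-k.\<close>
lemma dyadic_cube: "\<psi> (cube v (dyadic k)) = \<psi> (cube 0 1) * dyadic k ^ CARD('n)"
proof -
  let ?d = "dyadic k" and ?N = "2^k :: nat" and ?M = "{m::'n \<Rightarrow> nat. \<forall>i. m i < 2^k}"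
  have d0: "0 \<le> ?d" using dyadic_pos[of k] by simp
  have dN: "?d * real ?N = 1" by (simp add: dyadic_def)
  have unit_cube: "cube 0 1 \<subseteq> cbox 0 (\<chi> i. 0 $ i + ?d * real ?N)"
    using dN by (simp add: cube_def)
  have "\<psi> (cube 0 1) = (\<Sum>m\<in>?M. \<psi> (cube 0 1 \<inter> grid_cell 0 ?d m))"
    by (rule cut_additive_grid[OF cut_additive Cn_cube d0 _ unit_cube]) simp
  also have "\<dots> = (\<Sum>m\<in>?M. \<psi> (cube 0 ?d))"
  proof (rule sum.cong[OF refl])
    fix m assume m: "m \<in> ?M"
    have "grid_cell 0 ?d m \<subseteq> cube 0 1"
    proof
      fix x assume x: "x \<in> grid_cell 0 ?d m"
      have "0 \<le> x$i \<and> x$i \<le> 1" for i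
      proof -
        have "Suc (m i) \<le> ?N" using m by (simp add: Suc_le_eq)
        then have "real (m i) + 1 \<le> real ?N" by (metis of_nat_Suc of_nat_le_iff add.commute)
        then have "?d * (real (m i) + 1) \<le> 1" using mult_left_mono[OF _ d0] dN by metis
        moreover have "0 \<le> ?d * real (m i)" using d0 by simp
        moreover have "?d * real (m i) \<le> x$i \<and> x$i \<le> ?d * (real (m i) + 1)"
          using x by (simp add: grid_cell_def mem_box_cart)
        ultimately show ?thesis by linarith
      qed
      then show "x \<in> cube 0 1" by (simp add: cube_def mem_box_cart)
    qed
    then have "cube 0 1 \<inter> grid_cell 0 ?d m = cube (\<chi> i. ?d * real (m i)) ?d"
      by (simp add: Int_absorb1 grid_cell_eq_cube)
    then show "\<psi> (cube 0 1 \<inter> grid_cell 0 ?d m) = \<psi> (cube 0 ?d)"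
      using cube_translate_eq by simp
  qed
  also have "\<dots> = real (card ?M) * \<psi> (cube 0 ?d)" by simp
  also have "card ?M = ?N ^ CARD('n)"
  proof -
    have "?M = PiE UNIV (\<lambda>_. {..<?N})" by (auto simp: PiE_UNIV_domain Pi_def)
    then show ?thesis by (simp add: card_PiE)
  qed
  finally have "\<psi> (cube 0 ?d) = \<psi> (cube 0 1) * ?d ^ CARD('n)"
    by (simp add: dyadic_def power_divide power_mult[symmetric] field_simps)
  then show ?thesis by (simp only: cube_translate_eq[of v])
qed

end

lemma cube_subset_grid_hull:
  assumes \<delta>: "0 < \<delta>" and y: "y \<in> grid_hull \<delta> X"
    and interior: "\<forall>i. of_int (j i) * \<delta> < y$i \<and> y$i < (of_int (j i) + 1) * \<delta>"
  shows "cube (\<chi> i. of_int (j i) * \<delta>) \<delta> \<subseteq> grid_hull \<delta> X"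
proof
  fix w assume "w \<in> cube (\<chi> i. of_int (j i) * \<delta>) \<delta>"
  then have w: "of_int (j i) * \<delta> \<le> w$i \<and> w$i \<le> (of_int (j i) + 1) * \<delta>" for i
    by (simp add: cube_def mem_box_cart algebra_simps)
  obtain x where "x \<in> X" "\<forall>i. same_grid_interval \<delta> (x$i) (y$i)"
    using y unfolding grid_hull_def by blast
  moreover have "same_grid_interval \<delta> (x$i) (w$i)" if "same_grid_interval \<delta> (x$i) (y$i)" for i
    using same_grid_interval_cell[OF \<delta> that] interior w by blast
  ultimately show "w \<in> grid_hull \<delta> X" unfolding grid_hull_def by blast
qed

locale regular_simple_l1_valuation =
  continuous_simple_l1_valuation \<psi> + invariant_simple_l1_valuation \<psi>
  for \<psi> :: "(real ^ 'n::finite) set \<Rightarrow> real"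
begin

text \<open>A grid cube either lies inside the grid hull or meets it only in its boundary.\<close>
lemma grid_hull_Int_cube:
  fixes k :: nat and j :: "'n \<Rightarrow> int"
  assumes X: "X \<in> Cn"
  defines "d \<equiv> dyadic k"
  defines "C \<equiv> cube (\<chi> i. of_int (j i) * d) d"
  shows "\<psi> (grid_hull d X \<inter> C) = \<psi> (cube 0 1) * measure lebesgue (grid_hull d X \<inter> C)"
proof (cases "\<exists>y\<in>grid_hull d X. \<forall>i. of_int (j i) * d < y$i \<and> y$i < (of_int (j i) + 1) * d")
  case True
  then have "grid_hull d X \<inter> C = C"
    using cube_subset_grid_hull[OF dyadic_pos] unfolding d_def C_def by blast
  moreover have "measure lebesgue C = d ^ CARD('n)"
    unfolding C_def by (rule measure_cube) (simp add: d_def less_imp_le[OF dyadic_pos])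
  ultimately show ?thesis
    using dyadic_cube unfolding C_def d_def by simp
next
  case False
  define lo where "lo i = of_int (j i) * d" for i
  define H where "H = range (\<lambda>i. (i, lo i)) \<union> range (\<lambda>i. (i, lo i + d))"
  have "finite H" unfolding H_def by simp
  have "grid_hull d X \<inter> C \<subseteq> {x. \<exists>(i,t)\<in>H. x$i = t}"
  proof
    fix y assume y: "y \<in> grid_hull d X \<inter> C"
    obtain i where "\<not> (lo i < y$i \<and> y$i < lo i + d)"
      using False y by (auto simp: lo_def algebra_simps)
    moreover have "lo i \<le> y$i \<and> y$i \<le> lo i + d"
      using y by (simp add: C_def cube_def mem_box_cart lo_def)
    ultimately have "y$i = lo i \<or> y$i = lo i + d" by linarith
    then show "y \<in> {x. \<exists>(i,t)\<in>H. x$i = t}" unfolding H_def by auto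
  qed
  moreover have "grid_hull d X \<inter> C \<in> Cn"
    unfolding C_def cube_def d_def by (rule Cn_Int_cbox[OF Cn_grid_hull[OF dyadic_pos X]])
  ultimately have "\<psi> (grid_hull d X \<inter> C) = 0" "measure lebesgue (grid_hull d X \<inter> C) = 0"
    using eq_0_if_subset_hyperplanes[OF \<open>finite H\<close>]
      negligible_imp_measure0[OF negligible_subset[OF negligible_component_hyperplanes[OF \<open>finite H\<close>]]]
    by blast+
  then show ?thesis by simp
qed

lemma grid_hull_dyadic:
  assumes X: "X \<in> Cn"
  shows "\<psi> (grid_hull (dyadic k) X) = \<psi> (cube 0 1) * measure lebesgue (grid_hull (dyadic k) X)"
proof -
  let ?d = "dyadic k" and ?c = "\<psi> (cube 0 1)"
  let ?P = "grid_hull ?d X"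
  have d: "0 < ?d" by (rule dyadic_pos)
  have PC: "?P \<in> Cn" by (rule Cn_grid_hull[OF d X])
  have "bounded X" using X by (simp add: Cn_def compact_imp_bounded)
  then obtain N0 where "1 \<le> N0" and P_box: "?P \<subseteq> cbox (\<chi> i. - (real N0 * ?d)) (\<chi> i. real N0 * ?d)"
    using grid_hull_subset_box[OF d] by blast
  define a :: "real^'n" where "a = (\<chi> i. - (real N0 * ?d))"
  define N where "N = 2 * N0"
  have "N \<ge> 1" using \<open>1 \<le> N0\<close> by (simp add: N_def)
  have "(\<chi> i. a$i + ?d * real N) = (\<chi> i. real N0 * ?d)"
    by (simp add: a_def N_def vec_eq_iff algebra_simps)
  then have P_sub: "?P \<subseteq> cbox a (\<chi> i. a$i + ?d * real N)"
    using P_box by (simp add: a_def)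
  have cells: "grid_cell a ?d m = cube (\<chi> i. of_int (int (m i) - int N0) * ?d) ?d" for m
    unfolding grid_cell_eq_cube by (simp add: a_def algebra_simps)
  have "\<psi> ?P = (\<Sum>m\<in>{m. \<forall>i. m i < N}. \<psi> (?P \<inter> grid_cell a ?d m))"
    by (rule cut_additive_grid[OF cut_additive PC less_imp_le[OF d] \<open>N \<ge> 1\<close> P_sub])
  also have "\<dots> = (\<Sum>m\<in>{m. \<forall>i. m i < N}. ?c * measure lebesgue (?P \<inter> grid_cell a ?d m))"
    unfolding cells by (simp only: grid_hull_Int_cube[OF X])
  also have "\<dots> = ?c * (\<Sum>m\<in>{m. \<forall>i. m i < N}. measure lebesgue (?P \<inter> grid_cell a ?d m))"
    by (simp add: sum_distrib_left)
  also have "(\<Sum>m\<in>{m. \<forall>i. m i < N}. measure lebesgue (?P \<inter> grid_cell a ?d m)) = measure lebesgue ?P"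
    by (rule cut_additive_grid[OF cut_additive_measure PC less_imp_le[OF d] \<open>N \<ge> 1\<close> P_sub, symmetric])
  finally show ?thesis .
qed

lemma tendsto_grid_hull_dyadic:
  assumes X: "X \<in> Cn" "X \<noteq> {}"
  shows "(\<lambda>k. \<psi> (grid_hull (dyadic k) X)) \<longlonglongrightarrow> \<psi> X"
proof (rule LIMSEQ_I)
  fix e :: real assume "0 < e"
  then obtain r where "r > 0" and near: "\<forall>Y\<in>Cn. Y \<noteq> {} \<longrightarrow> hausdorff_dist X Y < r \<longrightarrow>
      \<bar>\<psi> Y - \<psi> X\<bar> < e"
    using continuous X unfolding hausdorff_continuous_def by blast
  have "\<forall>\<^sub>F k in sequentially. real CARD('n) * dyadic k < r"
    using order_tendstoD(2)[OF dyadic_tendsto_0 \<open>r > 0\<close>] .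
  then obtain K where K: "\<And>k. k \<ge> K \<Longrightarrow> real CARD('n) * dyadic k < r"
    unfolding eventually_sequentially by blast
  have "norm (\<psi> (grid_hull (dyadic k) X) - \<psi> X) < e" if "k \<ge> K" for k
  proof -
    have "hausdorff_dist X (grid_hull (dyadic k) X) < r"
      using hausdorff_dist_grid_hull_le[OF dyadic_pos X(2), of k] K[OF that] by linarith
    moreover have "grid_hull (dyadic k) X \<noteq> {}" using subset_grid_hull X(2) by blast
    ultimately show ?thesis using near Cn_grid_hull[OF dyadic_pos X(1)] by simp
  qed
  then show "\<exists>K. \<forall>k\<ge>K. norm (\<psi> (grid_hull (dyadic k) X) - \<psi> X) < e" by blast
qed

end

theorem proposition5p3:
  fixes \<psi> :: "(real ^ 'n) set \<Rightarrow> real"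
  assumes "valuation \<psi>"
    and "simple_valuation \<psi>"
    and "hausdorff_continuous \<psi>"
    and "translation_invariant \<psi>"
  shows "\<exists>c::real. \<forall>X\<in>Cn. \<psi> X = c * measure lebesgue X"
proof -
  interpret regular_simple_l1_valuation \<psi>
    by unfold_locales (fact assms)+
  have "\<psi> X = \<psi> (cube 0 1) * measure lebesgue X" if X: "X \<in> Cn" for X
  proof (cases "X = {}")
    case False
    have "(\<lambda>k. \<psi> (grid_hull (dyadic k) X)) \<longlonglongrightarrow> \<psi> (cube 0 1) * measure lebesgue X"
      unfolding grid_hull_dyadic[OF X] using X False
      by (intro tendsto_mult tendsto_const measure_grid_hull_dyadic_tendsto) (simp_all add: Cn_def)
    then show ?thesis by (rule LIMSEQ_unique[OF tendsto_grid_hull_dyadic[OF X False]])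
  qed simp
  then show ?thesis by blast
qed

end
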